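(* Fix an integer $\ell\ge1$ and let $n$ be a multiple of $\ell$. The expected runtime $T$ of the (1+1) EA on $\mathrm{BLO}_\ell$ with static mutation rate $p\in(0,1)$ satisfies, as $p\to0^+$, \[ \mathbb{E}[T]=2^\ell\left(\frac bp+a+O(p)\right)\frac{(1-p)^{-n+\ell}-(1-p)^{\ell}}{1-(1-p)^{\ell}}, \] where the constant in $O(p)$ depends only on $\ell$.
   Context: $s(\ell)=\sum_{j=1}^\ell\binom{\ell}{j}\frac1j$, $a=\frac12-\frac{1+s(\ell)}{2^{\ell+1}}$, $b=\frac{s(\ell)}{2^{\ell+1}}$. For $x\in\{0,1\}^n$, $\mathrm{BLO}_\ell(x)=\sum_{m=1}^{n/\ell}\prod_{i=1}^{m\ell}x_i$. The (1+1) EA with static mutation rate $p$: $x_0$ uniform on $\{0,1\}^n$; each iteration creates $y$ from the current $x$ by flipping each bit independently with probability $p$, and $y$ replaces $x$ iff $\mathrm{BLO}_\ell(y)\ge\mathrm{BLO}_\ell(x)$; $T$ is the number of iterations until the current individual first has fitness $n/\ell$ (zero if $x_0$ already does). *)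

theory Defs
  imports "HOL-Probability.Probability" "HOL-Probability.SPMF"
begin

definition s_const :: "nat \<Rightarrow> real" where
  "s_const l = (\<Sum>j=1..l. real (l choose j) / real j)"

definition a_const :: "nat \<Rightarrow> real" where
  "a_const l = 1/2 - (1 + s_const l) / 2 ^ (l + 1)"

definition b_const :: "nat \<Rightarrow> real" where
  "b_const l = s_const l / 2 ^ (l + 1)"

text \<open>Bit strings are boolean lists; position i of the list is bit x_(i+1) of the paper.\<close>
definition blo :: "nat \<Rightarrow> bool list \<Rightarrow> nat" where
  "blo l xs = (\<Sum>m\<in>{1..length xs div l}. if (\<forall>i<m * l. xs ! i) then 1 else 0)"

fun mutate :: "real \<Rightarrow> bool list \<Rightarrow> bool list pmf" where
  "mutate p [] = return_pmf []"
| "mutate p (x # xs) = bind_pmf (bernoulli_pmf p)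
      (\<lambda>b. map_pmf (\<lambda>ys. (if b then \<not> x else x) # ys) (mutate p xs))"

definition ea_step :: "real \<Rightarrow> nat \<Rightarrow> bool list \<Rightarrow> bool list pmf" where
  "ea_step p l x = map_pmf (\<lambda>y. if blo l y \<ge> blo l x then y else x) (mutate p x)"

definition ea_init :: "nat \<Rightarrow> bool list pmf" where
  "ea_init n = pmf_of_set {xs. length xs = n}"

definition kill_opt :: "nat \<Rightarrow> nat \<Rightarrow> bool list \<Rightarrow> bool list spmf" where
  "kill_opt l n x = (if blo l x = n div l then return_pmf None else return_spmf x)"

text \<open>alive p l n t is the sub-distribution of x_t restricted to the event that
  none of x_0, ..., x_t is optimal, i.e. the event T > t.\<close>
fun ea_alive :: "real \<Rightarrow> nat \<Rightarrow> nat \<Rightarrow> nat \<Rightarrow> bool list spmf" where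
  "ea_alive p l n 0 = bind_pmf (ea_init n) (kill_opt l n)"
| "ea_alive p l n (Suc t) =
     bind_spmf (ea_alive p l n t) (\<lambda>x. bind_pmf (ea_step p l x) (kill_opt l n))"

text \<open>E[T] = sum over t of Pr[T > t] (in ennreal, so it may be infinite).\<close>
definition expected_runtime :: "real \<Rightarrow> nat \<Rightarrow> nat \<Rightarrow> ennreal" where
  "expected_runtime p l n = (\<Sum>t. ennreal (weight_spmf (ea_alive p l n t)))"

end

theory Submission
  imports Defs
begin

text \<open>
  A string of fitness \<open>i\<close> consists of \<open>i\<close> complete blocks followed by an incomplete
  active block, and the bits behind the active block remain uniformly distributed.  An offspring
  is accepted only if it keeps the complete blocks, which happens with probability
  \<open>q\<^sub>i = (1 - p)^(i l)\<close>; the active block then performs the plain mutation walk.  For this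
  walk the expected time \<open>h(c)\<close> to reach the all-ones block is explicit in the Walsh basis,
  since the degree-\<open>m\<close> components decay by the factor \<open>(1 - 2p)^m\<close> per step:
  \<open>h(c) = \<Sum>\<^sub>m (C(l,m) - e\<^sub>m(c)) / (1 - (1 - 2p)^m)\<close>, whose mean over a uniform block is
  \<open>A = \<Sum>\<^sub>m C(l,m) / (1 - (1 - 2p)^m)\<close>.  Hence the potential
  \<open>h(c) / q\<^sub>i + A (1 / q\<^sub>i\<^sub>+\<^sub>1 + ... + 1 / q\<^sub>n\<^sub>/\<^sub>l\<^sub>-\<^sub>1)\<close> drops by exactly one in expectation
  per iteration before the optimum is found, so \<open>E[T] = A (1 / q\<^sub>0 + ... + 1 / q\<^sub>n\<^sub>/\<^sub>l\<^sub>-\<^sub>1)\<close>.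
  The sum is geometric, and \<open>1 / (1 - (1 - 2p)^m) = 1 / (2pm) + (m - 1) / (2m) + O(p)\<close>
  turns \<open>A\<close> into \<open>2^l (b / p + a + O(p))\<close>.
\<close>

section \<open>Uniform bit strings and mutation\<close>

definition uniform_bits :: "nat \<Rightarrow> bool list pmf" where
  "uniform_bits m = pmf_of_set {xs. length xs = m}"

lemma ea_init_eq_uniform_bits: "ea_init m = uniform_bits m"
  by (simp add: ea_init_def uniform_bits_def)

lemma finite_bool_lists_length [simp]: "finite {xs :: bool list. length xs = m}"
  using finite_lists_length_eq[of "UNIV :: bool set" m] by simp

lemma bool_lists_length_nonempty: "{xs :: bool list. length xs = m} \<noteq> {}"
  by (metis (mono_tags) empty_iff length_replicate mem_Collect_eq)

lemma pmf_uniform_bits: "pmf (uniform_bits m) xs = (if length xs = m then 1 / 2 ^ m else 0)"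
  using card_lists_length_eq[of "UNIV :: bool set" m] bool_lists_length_nonempty[of m]
  by (simp add: uniform_bits_def)

lemma set_pmf_uniform_bits [simp]: "set_pmf (uniform_bits m) = {xs. length xs = m}"
  unfolding uniform_bits_def
  by (intro set_pmf_of_set bool_lists_length_nonempty finite_bool_lists_length)

lemma uniform_bits_0: "uniform_bits 0 = return_pmf []"
  by (simp add: uniform_bits_def pmf_of_set_singleton)

lemma uniform_bits_Suc:
  "uniform_bits (Suc m) = bind_pmf (bernoulli_pmf (1/2)) (\<lambda>b. map_pmf (Cons b) (uniform_bits m))"
proof (rule pmf_eqI)
  fix ys :: "bool list"
  have pmf_Cons: "pmf (map_pmf (Cons b) (uniform_bits m)) (c # zs) =
      (if b = c then pmf (uniform_bits m) zs else 0)" for b c zs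
    by (cases "b = c") (auto simp: pmf_map_inj' inj_def pmf_eq_0_set_pmf)
  have pmf_Nil: "pmf (map_pmf (Cons b) (uniform_bits m)) [] = 0" for b
    by (auto simp: pmf_eq_0_set_pmf)
  show "pmf (uniform_bits (Suc m)) ys =
      pmf (bind_pmf (bernoulli_pmf (1/2)) (\<lambda>b. map_pmf (Cons b) (uniform_bits m))) ys"
    by (cases ys) (auto simp: pmf_uniform_bits pmf_bind integral_bernoulli_pmf pmf_Cons pmf_Nil)
qed

text \<open>The simplifier does not unfold the eta-contracted \<open>(@) xs\<close> arising from \<open>map_pmf\<close>.\<close>
lemma append_eta: "(@) [] = (\<lambda>ys. ys)" "(@) (x # xs) = (\<lambda>ys. x # xs @ ys)"
  by auto

lemma uniform_bits_add:
  "uniform_bits (a + b) = bind_pmf (uniform_bits a) (\<lambda>x. map_pmf (\<lambda>y. x @ y) (uniform_bits b))"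
  by (induction a) (simp_all add: append_eta uniform_bits_0 uniform_bits_Suc bind_return_pmf
      map_pmf_ident map_bind_pmf bind_map_pmf bind_assoc_pmf map_pmf_comp)

lemma mutate_append:
  "mutate p (xs @ ys) = bind_pmf (mutate p xs) (\<lambda>a. map_pmf (\<lambda>b. a @ b) (mutate p ys))"
  by (induction xs) (simp_all add: append_eta bind_return_pmf map_pmf_ident map_bind_pmf bind_map_pmf
      bind_assoc_pmf map_pmf_comp)

lemma length_mutate: "ys \<in> set_pmf (mutate p xs) \<Longrightarrow> length ys = length xs"
  by (induction xs arbitrary: ys) auto

lemma finite_set_pmf_mutate [simp]: "finite (set_pmf (mutate p xs))"
  by (rule finite_subset[of _ "{ys. length ys = length xs}"]) (auto dest: length_mutate)

lemma map_pmf_flip_bernoulli_half: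
  "map_pmf (\<lambda>b. if f then \<not> b else b) (bernoulli_pmf (1/2)) = bernoulli_pmf (1/2)"
proof -
  have "bij_betw (\<lambda>b. if f then \<not> b else b) UNIV UNIV"
    by (rule bij_betwI[where g = "\<lambda>b. if f then \<not> b else b"]) auto
  then show ?thesis
    unfolding bernoulli_pmf_half_conv_pmf_of_set by (intro map_pmf_of_set_bij_betw) auto
qed

lemma uniform_bits_bind_mutate: "bind_pmf (uniform_bits m) (mutate p) = uniform_bits m"
proof (induction m)
  case 0
  then show ?case by (simp add: uniform_bits_0 bind_return_pmf)
next
  case (Suc m)
  have "bind_pmf (uniform_bits (Suc m)) (mutate p) =
     bind_pmf (bernoulli_pmf (1/2)) (\<lambda>b. bind_pmf (bernoulli_pmf p) (\<lambda>f.
        map_pmf (Cons (if f then \<not> b else b)) (bind_pmf (uniform_bits m) (mutate p))))"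
    by (simp add: uniform_bits_Suc bind_map_pmf bind_assoc_pmf map_bind_pmf)
       (subst bind_commute_pmf, simp)
  also have "\<dots> = bind_pmf (bernoulli_pmf p) (\<lambda>f.
      bind_pmf (map_pmf (\<lambda>b. if f then \<not> b else b) (bernoulli_pmf (1/2)))
        (\<lambda>b. map_pmf (Cons b) (uniform_bits m)))"
    by (subst bind_commute_pmf) (simp add: Suc.IH bind_map_pmf)
  also have "\<dots> = uniform_bits (Suc m)"
    by (simp add: map_pmf_flip_bernoulli_half uniform_bits_Suc[symmetric] bind_pmf_const)
  finally show ?case .
qed

lemma pmf_mutate_self:
  assumes "0 \<le> p" "p \<le> 1"
  shows "pmf (mutate p xs) xs = (1 - p) ^ length xs"
proof (induction xs)
  case Nil
  then show ?case by simp
next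
  case (Cons x xs)
  have "pmf (map_pmf (\<lambda>ys. (if b then \<not> x else x) # ys) (mutate p xs)) (x # xs) =
      (if b then 0 else pmf (mutate p xs) xs)" for b
    by (cases b) (auto simp: pmf_eq_0_set_pmf pmf_map_inj' inj_def)
  then show ?case
    using Cons assms by (simp add: pmf_bind integral_bernoulli_pmf)
qed

abbreviation E :: "'a pmf \<Rightarrow> ('a \<Rightarrow> real) \<Rightarrow> real" where
  "E M f \<equiv> measure_pmf.expectation M f"

lemma expectation_cong: "(\<And>x. x \<in> set_pmf M \<Longrightarrow> f x = g x) \<Longrightarrow> E M f = E M g"
  by (rule integral_cong_AE) (auto simp: AE_measure_pmf_iff)

lemma integrable_measure_pmf_bounded:
  "(\<And>x. \<bar>f x\<bar> \<le> B) \<Longrightarrow> integrable (measure_pmf M) (f :: _ \<Rightarrow> real)"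
  by (rule measure_pmf.integrable_const_bound[where B = B]) auto

lemma finite_set_pmf_bernoulli [simp]: "finite (set_pmf (bernoulli_pmf p))"
  by (rule finite_subset[of _ UNIV]) auto

lemma integrable_measure_pmf_finite_support [simp]:
  "finite (set_pmf M) \<Longrightarrow> integrable (measure_pmf M) (f :: _ \<Rightarrow> real)"
  by (rule integrable_measure_pmf_finite)

lemma expectation_bind_finite:
  assumes "finite (set_pmf M)" "\<And>x. x \<in> set_pmf M \<Longrightarrow> finite (set_pmf (f x))"
  shows "E (bind_pmf M f) g = E M (\<lambda>x. E (f x) g)"
  using assms
  by (subst pmf_expectation_bind[of "set_pmf M"])
     (auto simp: integral_measure_pmf[of "set_pmf M"] mult.commute)

lemma expectation_bind_bounded:
  assumes "\<And>x. \<bar>g x\<bar> \<le> B"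
  shows "E (bind_pmf M f) g = E M (\<lambda>x. E (f x) g)"
  unfolding measure_pmf_bind using measurable_measure_pmf[of f] assms
  by (intro integral_bind[where K = "count_space UNIV" and B = B and B' = 1])
     (auto simp: prob_space_imp_subprob_space measure_pmf.prob_space_axioms
       intro: prob_space.finite_measure[OF measure_pmf.prob_space_axioms])

lemma expectation_if_eq:
  "E M (\<lambda>a. if a = y then u else v) = pmf M y * u + (1 - pmf M y) * v"
proof -
  have "E M (\<lambda>a. if a = y then u else v) = E M (\<lambda>a. v + (u - v) * indicator {y} a)"
    by (rule expectation_cong) (auto simp: indicator_def)
  also have "\<dots> = v + (u - v) * pmf M y"
  proof -
    have "integrable M (\<lambda>a. (u - v) * indicator {y} a :: real)"
      by (rule integrable_measure_pmf_bounded[where B = "\<bar>u - v\<bar>"]) (auto simp: indicator_def)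
    then show ?thesis
      by (simp add: Bochner_Integration.integral_add measure_pmf_single)
  qed
  finally show ?thesis by (simp add: algebra_simps)
qed

section \<open>The hitting time of a single block\<close>

text \<open>\<open>sign_esym m c\<close> is the \<open>m\<close>-th elementary symmetric polynomial in the signs
  \<open>\<plusminus>1\<close> of the bits of \<open>c\<close>, i.e.\ the sum of the Walsh characters of degree \<open>m\<close>.\<close>
fun sign_esym :: "nat \<Rightarrow> bool list \<Rightarrow> real" where
  "sign_esym 0 c = 1"
| "sign_esym (Suc m) [] = 0"
| "sign_esym (Suc m) (b # c) = sign_esym (Suc m) c + (if b then 1 else -1) * sign_esym m c"

lemma expectation_mutate_sign_esym:
  assumes "0 \<le> p" "p \<le> 1"
  shows "E (mutate p c) (sign_esym m) = (1 - 2 * p) ^ m * sign_esym m c"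
proof (induction c arbitrary: m)
  case Nil
  then show ?case by (cases m) simp_all
next
  case (Cons x c)
  show ?case
  proof (cases m)
    case 0
    then show ?thesis by simp
  next
    case (Suc j)
    have "E (mutate p (x # c)) (sign_esym (Suc j)) = E (bernoulli_pmf p) (\<lambda>f.
        E (mutate p c) (sign_esym (Suc j)) +
        (if (if f then \<not> x else x) then 1 else -1) * E (mutate p c) (sign_esym j))"
      by (simp add: expectation_bind_finite)
    then show ?thesis
      using assms by (cases x) (simp_all add: Suc Cons.IH integral_bernoulli_pmf algebra_simps)
  qed
qed

lemma sign_esym_eq_0: "length c < m \<Longrightarrow> sign_esym m c = 0"
proof (induction c arbitrary: m)
  case Nil
  then show ?case by (cases m) auto
next
  case (Cons b c)
  then show ?case by (cases m) auto
qed

text \<open>This is \<open>\<Prod>\<^sub>i (1 + s\<^sub>i) = \<Sum>\<^sub>m e\<^sub>m(s)\<close> for the signs \<open>s\<^sub>i\<close> of the bits.\<close>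
lemma sum_sign_esym:
  "(\<Sum>m\<le>length c. sign_esym m c) = (if (\<forall>b\<in>set c. b) then 2 ^ length c else 0)"
proof (induction c)
  case Nil
  then show ?case by simp
next
  case (Cons b c)
  have "(\<Sum>m\<le>length (b # c). sign_esym m (b # c)) =
      1 + (\<Sum>m\<le>length c. sign_esym (Suc m) (b # c))"
    by (simp only: length_Cons sum.atMost_Suc_shift) simp
  also have "\<dots> = 1 + (\<Sum>m\<le>length c. sign_esym (Suc m) c) +
      (if b then 1 else -1) * (\<Sum>m\<le>length c. sign_esym m c)"
    by (simp add: sum.distrib sum_distrib_left)
  also have "1 + (\<Sum>m\<le>length c. sign_esym (Suc m) c) = (\<Sum>m\<le>length c. sign_esym m c)"
  proof -
    have "(\<Sum>m\<le>Suc (length c). sign_esym m c) = 1 + (\<Sum>m\<le>length c. sign_esym (Suc m) c)"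
      by (simp only: sum.atMost_Suc_shift) simp
    then show ?thesis by (simp add: sign_esym_eq_0)
  qed
  finally show ?case
    using Cons by auto
qed

lemma sign_esym_replicate_True: "sign_esym m (replicate L True) = real (L choose m)"
proof (induction L arbitrary: m)
  case 0
  then show ?case by (cases m) auto
next
  case (Suc L)
  then show ?case by (cases m) auto
qed

lemma abs_sign_esym_le: "\<bar>sign_esym m c\<bar> \<le> real (length c choose m)"
proof (induction c arbitrary: m)
  case Nil
  then show ?case by (cases m) auto
next
  case (Cons b c)
  show ?case
  proof (cases m)
    case 0
    then show ?thesis by simp
  next
    case (Suc j)
    have "\<bar>sign_esym (Suc j) (b # c)\<bar> \<le> \<bar>sign_esym (Suc j) c\<bar> + \<bar>sign_esym j c\<bar>"
      by (auto simp: abs_if)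
    also have "\<dots> \<le> real (length c choose Suc j) + real (length c choose j)"
      using Cons.IH[of "Suc j"] Cons.IH[of j] by linarith
    finally show ?thesis by (simp add: Suc)
  qed
qed

lemma expectation_uniform_bits_sign_esym: "0 < m \<Longrightarrow> E (uniform_bits L) (sign_esym m) = 0"
proof (induction L arbitrary: m)
  case 0
  then show ?case by (cases m) (auto simp: uniform_bits_0)
next
  case (Suc L)
  then obtain j where j: "m = Suc j" by (cases m) auto
  have "E (uniform_bits (Suc L)) (sign_esym m) = E (bernoulli_pmf (1/2)) (\<lambda>b.
      E (uniform_bits L) (sign_esym (Suc j)) + (if b then 1 else -1) * E (uniform_bits L) (sign_esym j))"
    by (simp add: uniform_bits_Suc expectation_bind_finite j)
  then show ?case
    using Suc.IH[of "Suc j"] by (simp add: integral_bernoulli_pmf)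
qed

lemma one_minus_power_pos:
  fixes p :: real
  assumes "0 < p" "p < 1" "0 < m"
  shows "0 < 1 - (1 - 2 * p) ^ m"
proof -
  have "\<bar>1 - 2 * p\<bar> ^ m < 1"
    using assms by (simp add: power_less_one_iff)
  then show ?thesis
    by (metis abs_ge_self le_less_trans power_abs diff_gt_0_iff_gt)
qed

text \<open>Expected number of mutations of the block \<open>c\<close> of length \<open>l\<close> until it is all ones;
  each Walsh component of degree \<open>m\<close> decays by the factor \<open>(1 - 2p)\<^sup>m\<close> per mutation.\<close>
definition block_time :: "real \<Rightarrow> nat \<Rightarrow> bool list \<Rightarrow> real" where
  "block_time p l c = (\<Sum>m=1..l. (real (l choose m) - sign_esym m c) / (1 - (1 - 2 * p) ^ m))"

definition mean_block_time :: "real \<Rightarrow> nat \<Rightarrow> real" where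
  "mean_block_time p l = (\<Sum>m=1..l. real (l choose m) / (1 - (1 - 2 * p) ^ m))"

lemma block_time_replicate_True: "block_time p l (replicate l True) = 0"
  by (simp add: block_time_def sign_esym_replicate_True)

lemma block_time_nonneg:
  "0 < p \<Longrightarrow> p < 1 \<Longrightarrow> length c = l \<Longrightarrow> 0 \<le> block_time p l c"
  unfolding block_time_def
  by (intro sum_nonneg divide_nonneg_pos)
     (use abs_sign_esym_le[of _ c] one_minus_power_pos in \<open>auto simp: abs_le_iff\<close>)

lemma mean_block_time_nonneg: "0 < p \<Longrightarrow> p < 1 \<Longrightarrow> 0 \<le> mean_block_time p l"
  unfolding mean_block_time_def using one_minus_power_pos
  by (intro sum_nonneg divide_nonneg_pos) auto

lemma expectation_uniform_bits_block_time: "E (uniform_bits l) (block_time p l) = mean_block_time p l"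
  unfolding block_time_def mean_block_time_def
  by (simp add: integral_sum[where I = "{1..l}"] expectation_uniform_bits_sign_esym diff_divide_distrib)

lemma expectation_mutate_block_time:
  assumes "0 < p" "p < 1" "length c = l" "\<not> (\<forall>b\<in>set c. b)"
  shows "E (mutate p c) (block_time p l) = block_time p l c - 1"
proof -
  have "E (mutate p c) (block_time p l) =
      (\<Sum>m=1..l. (real (l choose m) - (1 - 2 * p) ^ m * sign_esym m c) / (1 - (1 - 2 * p) ^ m))"
    unfolding block_time_def using assms
    by (simp add: integral_sum[where I = "{1..l}"] expectation_mutate_sign_esym diff_divide_distrib)
  also have "\<dots> = block_time p l c + (\<Sum>m=1..l. sign_esym m c)"
    unfolding block_time_def sum.distrib[symmetric]
  proof (rule sum.cong[OF refl])
    fix m assume "m \<in> {1..l}"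
    then have "0 < 1 - (1 - 2 * p) ^ m" using one_minus_power_pos assms by auto
    then show "(real (l choose m) - (1 - 2 * p) ^ m * sign_esym m c) / (1 - (1 - 2 * p) ^ m) =
        (real (l choose m) - sign_esym m c) / (1 - (1 - 2 * p) ^ m) + sign_esym m c"
      by (simp add: field_simps)
  qed
  also have "(\<Sum>m=1..l. sign_esym m c) = -1"
  proof -
    have "(\<Sum>m\<le>l. sign_esym m c) = 0" using sum_sign_esym[of c] assms by auto
    moreover have "{..l} = insert 0 {1..l}" by auto
    ultimately show ?thesis by simp
  qed
  finally show ?thesis by simp
qed

section \<open>Fitness of concatenated blocks\<close>

lemma all_nth_append_iff:
  assumes "length c = l"
  shows "(\<forall>i<l + j. (c @ ys) ! i) \<longleftrightarrow> (\<forall>i<l. c ! i) \<and> (\<forall>i<j. ys ! i)"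
proof
  assume all: "\<forall>i<l + j. (c @ ys) ! i"
  show "(\<forall>i<l. c ! i) \<and> (\<forall>i<j. ys ! i)"
  proof (intro conjI allI impI)
    show "c ! i" if "i < l" for i
      using all[rule_format, of i] that assms by (simp add: nth_append)
    show "ys ! i" if "i < j" for i
      using all[rule_format, of "l + i"] that assms by (simp add: nth_append)
  qed
next
  assume "(\<forall>i<l. c ! i) \<and> (\<forall>i<j. ys ! i)"
  then show "\<forall>i<l + j. (c @ ys) ! i"
    using assms by (auto simp: nth_append)
qed

lemma blo_eq_0: "length xs < l \<Longrightarrow> blo l xs = 0"
  by (simp add: blo_def)

lemma blo_le: "blo l xs \<le> length xs div l"
  unfolding blo_def by (rule order_trans[OF sum_mono[of _ _ "\<lambda>_. 1"]]) auto

lemma blo_append_block: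
  assumes "1 \<le> l" "length c = l"
  shows "blo l (c @ ys) = (if \<forall>b\<in>set c. b then Suc (blo l ys) else 0)"
proof -
  define f where "f m = (if \<forall>i<m * l. (c @ ys) ! i then 1 else (0 :: nat))" for m
  have "length (c @ ys) div l = Suc (length ys div l)"
    using assms by simp
  then have blo_f: "blo l (c @ ys) = f 1 + (\<Sum>m=1..length ys div l. f (Suc m))"
    unfolding blo_def f_def
    by (simp add: sum.atLeast_Suc_atMost sum.atLeast_Suc_atMost_Suc_shift del: sum.cl_ivl_Suc)
  show ?thesis
  proof (cases "\<forall>b\<in>set c. b")
    case True
    then have c: "\<forall>i<l. c ! i"
      using assms by (simp add: all_set_conv_all_nth)
    have "f (Suc m) = (if \<forall>i<m * l. ys ! i then 1 else 0)" for m
      unfolding f_def using all_nth_append_iff[OF assms(2), of "m * l" ys] c by simp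
    then show ?thesis
      using blo_f c True by (simp add: blo_def f_def all_nth_append_iff[OF assms(2), of 0, simplified])
  next
    case False
    then obtain j where j: "j < l" "\<not> c ! j"
      using assms by (auto simp: all_set_conv_all_nth)
    have "f m = 0" if "1 \<le> m" for m
    proof -
      have "j < m * l" using j that by (metis less_le_trans mult_1 mult_le_mono1)
      then show ?thesis unfolding f_def using j assms by (auto simp: nth_append)
    qed
    then show ?thesis
      using blo_f False by simp
  qed
qed

lemma blo_replicate_append:
  "1 \<le> l \<Longrightarrow> blo l (replicate (i * l) True @ ys) = i + blo l ys"
  by (induction i) (simp_all add: replicate_add blo_append_block)

lemma blo_less:
  assumes "1 \<le> l" "length a = i * l" "a \<noteq> replicate (i * l) True"
  shows "blo l (a @ ys) < i"
  using assms(2,3)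
proof (induction i arbitrary: a)
  case 0
  then show ?case by simp
next
  case (Suc i)
  have a: "a = take l a @ drop l a" by simp
  have len: "length (take l a) = l" "length (drop l a) = i * l"
    using Suc.prems by simp_all
  show ?case
  proof (cases "\<forall>b\<in>set (take l a). b")
    case True
    then have "take l a = replicate l True"
      using len by (simp add: list_eq_iff_nth_eq all_set_conv_all_nth)
    then have "drop l a \<noteq> replicate (i * l) True"
      using Suc.prems a by (metis replicate_add mult_Suc)
    then have "blo l (drop l a @ ys) < i" using Suc.IH len by simp
    then show ?thesis using True assms(1) len a
      by (metis append_assoc blo_append_block Suc_less_eq)
  next
    case False
    then show ?thesis using assms(1) len a
      by (metis append_assoc blo_append_block zero_less_Suc)
  qed
qed

lemma blo_decomp:
  assumes "1 \<le> l" "blo l xs = i" "(i + 1) * l \<le> length xs"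
  shows "take (i * l) xs = replicate (i * l) True \<and> \<not> (\<forall>b\<in>set (take l (drop (i * l) xs)). b)"
  using assms(2,3)
proof (induction i arbitrary: xs)
  case 0
  then show ?case
    using blo_append_block[OF assms(1), of "take l xs" "drop l xs"] by (auto split: if_splits)
next
  case (Suc i)
  have "blo l xs = (if \<forall>b\<in>set (take l xs). b then Suc (blo l (drop l xs)) else 0)"
    using blo_append_block[OF assms(1), of "take l xs" "drop l xs"] Suc.prems by simp
  then have tk: "\<forall>b\<in>set (take l xs). b" and bd: "blo l (drop l xs) = i"
    using Suc.prems(1) by (auto split: if_splits)
  have "(i + 1) * l \<le> length (drop l xs)"
    using Suc.prems by simp
  from Suc.IH[OF bd this] have ih: "take (i * l) (drop l xs) = replicate (i * l) True"
    "\<not> (\<forall>b\<in>set (take l (drop (i * l) (drop l xs))). b)" by auto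
  have "take l xs = replicate l True"
    using tk Suc.prems by (simp add: list_eq_iff_nth_eq all_set_conv_all_nth)
  then have "take (Suc i * l) xs = replicate (Suc i * l) True"
    using ih(1) by (simp add: take_add replicate_add)
  moreover have "drop (Suc i * l) xs = drop (i * l) (drop l xs)"
    by (simp add: add.commute)
  ultimately show ?case
    using ih(2) by simp
qed

section \<open>The drift argument\<close>

locale blo_ea =
  fixes p :: real and l k :: nat
  assumes p_pos: "0 < p" and p_less_1: "p < 1" and l_pos: "1 \<le> l"
begin

abbreviation n :: nat where "n \<equiv> k * l"

abbreviation alive :: "nat \<Rightarrow> bool list spmf" where "alive t \<equiv> ea_alive p l n t"

definition keep_prob :: "nat \<Rightarrow> real" where
  "keep_prob i = (1 - p) ^ (i * l)"

definition tail_time :: "nat \<Rightarrow> real" where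
  "tail_time j = mean_block_time p l * (\<Sum>i=j..<k. 1 / keep_prob i)"

definition ones_prefix :: "nat \<Rightarrow> bool list" where
  "ones_prefix i = replicate (i * l) True"

definition active_block :: "bool list \<Rightarrow> bool list" where
  "active_block x = take l (drop (blo l x * l) x)"

text \<open>Expected remaining optimisation time: the time to complete the active block, slowed down
  by the probability of keeping the complete blocks, plus that of all later blocks.\<close>
definition potential :: "bool list \<Rightarrow> real" where
  "potential x = (if length x = n \<and> blo l x < k
     then block_time p l (active_block x) / keep_prob (blo l x) + tail_time (Suc (blo l x))
     else 0)"

definition potential_opt :: "bool list option \<Rightarrow> real" where
  "potential_opt = case_option 0 potential"

lemma potential_opt_simps [simp]: "potential_opt None = 0" "potential_opt (Some x) = potential x"
  by (simp_all add: potential_opt_def)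

definition block_state :: "nat \<Rightarrow> bool list \<Rightarrow> bool list spmf" where
  "block_state j b = map_pmf (\<lambda>w. Some (ones_prefix j @ b @ w)) (uniform_bits (n - (j + 1) * l))"

definition uniform_completion :: "bool list \<Rightarrow> bool list spmf" where
  "uniform_completion y = bind_pmf (uniform_bits (n - length y)) (\<lambda>w. kill_opt l n (y @ w))"

definition resample_suffix :: "bool list \<Rightarrow> bool list spmf" where
  "resample_suffix x = map_pmf (\<lambda>z. Some (take ((blo l x + 1) * l) x @ z))
     (uniform_bits (length x - (blo l x + 1) * l))"

text \<open>The bits behind the active block are uniformly distributed and independent of the rest.\<close>
definition suffix_uniform :: "bool list spmf \<Rightarrow> bool" where
  "suffix_uniform M \<longleftrightarrow> bind_spmf M resample_suffix = M"

lemma keep_prob_pos: "0 < keep_prob i"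
  unfolding keep_prob_def using p_less_1 by simp

lemma tail_time_nonneg: "0 \<le> tail_time j"
  unfolding tail_time_def using mean_block_time_nonneg[OF p_pos p_less_1] keep_prob_pos
  by (intro mult_nonneg_nonneg sum_nonneg) (auto intro: less_imp_le)

lemma tail_time_k: "tail_time k = 0"
  by (simp add: tail_time_def)

lemma tail_time_step: "j < k \<Longrightarrow> tail_time j = mean_block_time p l / keep_prob j + tail_time (Suc j)"
  unfolding tail_time_def by (simp add: sum.atLeast_Suc_lessThan distrib_left)

lemma block_end_le_n: "j < k \<Longrightarrow> (j + 1) * l \<le> n"
  using mult_le_mono1[of "Suc j" k l] by simp

lemma kill_opt_eq:
  "length x = n \<Longrightarrow> kill_opt l n x = (if blo l x = k then return_pmf None else return_spmf x)"
  unfolding kill_opt_def using l_pos by simp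

lemma length_ones_prefix [simp]: "length (ones_prefix j) = j * l"
  by (simp add: ones_prefix_def)

lemma ones_prefix_Suc: "ones_prefix j @ replicate l True = ones_prefix (Suc j)"
  by (simp add: ones_prefix_def replicate_add[symmetric] add.commute)

lemma blo_ones_prefix_append: "blo l (ones_prefix j @ ys) = j + blo l ys"
  unfolding ones_prefix_def using blo_replicate_append[OF l_pos] by simp

lemma blo_ones_prefix_block:
  assumes "length b = l" "\<not> (\<forall>x\<in>set b. x)"
  shows "blo l (ones_prefix j @ b @ w) = j"
  using assms l_pos by (simp add: blo_ones_prefix_append blo_append_block)

lemma active_block_ones_prefix_block:
  assumes "length b = l" "\<not> (\<forall>x\<in>set b. x)"
  shows "active_block (ones_prefix j @ b @ w) = b"
  using assms unfolding active_block_def by (simp add: blo_ones_prefix_block)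

lemma resample_suffix_ones_prefix_block:
  assumes "length b = l" "\<not> (\<forall>x\<in>set b. x)"
  shows "resample_suffix (ones_prefix j @ b @ w) =
    map_pmf (\<lambda>z. Some (ones_prefix j @ b @ z)) (uniform_bits (length w))"
  using assms unfolding resample_suffix_def by (simp add: blo_ones_prefix_block)

lemma all_True_eq_replicate: "length b = l \<Longrightarrow> (\<forall>x\<in>set b. x) \<Longrightarrow> b = replicate l True"
  by (simp add: list_eq_iff_nth_eq all_set_conv_all_nth)

lemma suffix_uniform_bind_pmf:
  "(\<And>x. x \<in> set_pmf M \<Longrightarrow> suffix_uniform (f x)) \<Longrightarrow> suffix_uniform (bind_pmf M f)"
  unfolding suffix_uniform_def bind_spmf_def by (simp add: bind_assoc_pmf cong: bind_pmf_cong)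

lemma suffix_uniform_None: "suffix_uniform (return_pmf None)"
  by (simp add: suffix_uniform_def)

lemma suffix_uniform_block_state:
  assumes "length b = l" "\<not> (\<forall>x\<in>set b. x)" "j < k"
  shows "suffix_uniform (block_state j b)"
proof -
  have "bind_spmf (block_state j b) resample_suffix =
      bind_pmf (uniform_bits (n - (j + 1) * l)) (\<lambda>w. resample_suffix (ones_prefix j @ b @ w))"
    by (simp add: block_state_def bind_spmf_def bind_map_pmf)
  also have "\<dots> = bind_pmf (uniform_bits (n - (j + 1) * l)) (\<lambda>w. block_state j b)"
    by (rule bind_pmf_cong) (auto simp: resample_suffix_ones_prefix_block assms block_state_def)
  finally show ?thesis
    unfolding suffix_uniform_def by (simp add: bind_pmf_const)
qed

lemma expectation_block_state:
  assumes "length b = l" "\<not> (\<forall>x\<in>set b. x)" "j < k"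
  shows "E (block_state j b) potential_opt = block_time p l b / keep_prob j + tail_time (Suc j)"
proof -
  have "potential_opt (Some (ones_prefix j @ b @ w)) = block_time p l b / keep_prob j + tail_time (Suc j)"
    if "length w = n - (j + 1) * l" for w
    using that assms block_end_le_n[OF assms(3)]
    by (simp add: potential_opt_def potential_def blo_ones_prefix_block active_block_ones_prefix_block)
  then have "E (block_state j b) potential_opt =
      E (uniform_bits (n - (j + 1) * l)) (\<lambda>_. block_time p l b / keep_prob j + tail_time (Suc j))"
    unfolding block_state_def integral_map_pmf by (intro expectation_cong) simp
  then show ?thesis by simp
qed

definition potential_bound :: real where
  "potential_bound = Max ((\<lambda>x. \<bar>potential x\<bar>) ` {x. length x = n})"

lemma abs_potential_le: "\<bar>potential x\<bar> \<le> potential_bound"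
proof -
  have "\<bar>potential y\<bar> \<le> potential_bound" if "length y = n" for y
    unfolding potential_bound_def using that by (intro Max_ge) auto
  from this[of x] this[of "replicate n True"] show ?thesis
    unfolding potential_def by (cases "length x = n") auto
qed

lemma abs_potential_opt_le: "\<bar>potential_opt ov\<bar> \<le> potential_bound"
  using abs_potential_le[of "replicate n True"] abs_potential_le
  by (cases ov) (auto simp: potential_opt_def potential_def)

lemma length_active_block: "length x = n \<Longrightarrow> blo l x < k \<Longrightarrow> length (active_block x) = l"
  using block_end_le_n[of "blo l x"] by (simp add: active_block_def)

lemma potential_nonneg: "0 \<le> potential x"
  using block_time_nonneg[OF p_pos p_less_1 length_active_block] keep_prob_pos tail_time_nonneg
  by (auto simp: potential_def intro!: add_nonneg_nonneg divide_nonneg_pos)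

lemma potential_opt_nonneg: "0 \<le> potential_opt ov"
  using potential_nonneg by (cases ov) (auto simp: potential_opt_def)

lemma uniform_completion_ones_prefix_block:
  assumes "j < k" "length b = l"
  shows "uniform_completion (ones_prefix j @ b) =
    (if \<forall>x\<in>set b. x then uniform_completion (ones_prefix (Suc j)) else block_state j b)"
proof (cases "\<forall>x\<in>set b. x")
  case True
  then show ?thesis
    using all_True_eq_replicate[OF assms(2) True] ones_prefix_Suc by simp
next
  case False
  have "kill_opt l n (ones_prefix j @ b @ w) = return_pmf (Some (ones_prefix j @ b @ w))"
    if "length w = n - (j + 1) * l" for w
    using that assms False block_end_le_n[OF assms(1)]
    by (simp add: kill_opt_eq blo_ones_prefix_block)
  then show ?thesis
    using False assms(2)
    by (auto simp: uniform_completion_def block_state_def map_pmf_def add.commute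
        intro!: bind_pmf_cong)
qed

lemma uniform_completion_ones_prefix:
  assumes "j < k"
  shows "uniform_completion (ones_prefix j) = bind_pmf (uniform_bits l) (\<lambda>b.
    if \<forall>x\<in>set b. x then uniform_completion (ones_prefix (Suc j)) else block_state j b)"
proof -
  have len: "n - j * l = l + (n - (j + 1) * l)"
    using block_end_le_n[OF assms] by simp
  have "uniform_completion (ones_prefix j) =
      bind_pmf (uniform_bits l) (\<lambda>b. uniform_completion (ones_prefix j @ b))"
    unfolding uniform_completion_def
    by (simp add: len uniform_bits_add bind_map_pmf bind_assoc_pmf)
       (rule bind_pmf_cong[OF refl], simp add: algebra_simps)
  also have "\<dots> = bind_pmf (uniform_bits l) (\<lambda>b.
      if \<forall>x\<in>set b. x then uniform_completion (ones_prefix (Suc j)) else block_state j b)"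
    by (auto simp: uniform_completion_ones_prefix_block[OF assms] intro!: bind_pmf_cong)
  finally show ?thesis .
qed

lemma uniform_completion_ones_prefix_k: "uniform_completion (ones_prefix k) = return_pmf None"
  using kill_opt_eq[of "ones_prefix k"] blo_ones_prefix_append[of k "[]"] l_pos
  by (simp add: uniform_completion_def uniform_bits_0 bind_return_pmf blo_eq_0)

lemma suffix_uniform_uniform_completion:
  "j \<le> k \<Longrightarrow> suffix_uniform (uniform_completion (ones_prefix j))"
proof (induction "k - j" arbitrary: j)
  case 0
  then have "j = k" by simp
  then show ?case by (simp add: uniform_completion_ones_prefix_k suffix_uniform_None)
next
  case (Suc d)
  then have IH: "suffix_uniform (uniform_completion (ones_prefix (Suc j)))" and "j < k"
    by simp_all
  show ?case
    unfolding uniform_completion_ones_prefix[OF \<open>j < k\<close>]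
  proof (intro suffix_uniform_bind_pmf)
    fix b assume "b \<in> set_pmf (uniform_bits l)"
    then have "length b = l" by simp
    then show "suffix_uniform (if \<forall>x\<in>set b. x then uniform_completion (ones_prefix (Suc j))
        else block_state j b)"
      using IH suffix_uniform_block_state[OF \<open>length b = l\<close> _ \<open>j < k\<close>] by simp
  qed
qed

lemma expectation_uniform_completion:
  "j \<le> k \<Longrightarrow> E (uniform_completion (ones_prefix j)) potential_opt = tail_time j"
proof (induction "k - j" arbitrary: j)
  case 0
  then have "j = k" by simp
  then show ?case by (simp add: uniform_completion_ones_prefix_k tail_time_k potential_opt_def)
next
  case (Suc d)
  then have IH: "E (uniform_completion (ones_prefix (Suc j))) potential_opt = tail_time (Suc j)"
    and "j < k"
    by simp_all
  have "E (uniform_completion (ones_prefix j)) potential_opt =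
      E (uniform_bits l) (\<lambda>b. E (if \<forall>x\<in>set b. x then uniform_completion (ones_prefix (Suc j))
        else block_state j b) potential_opt)"
    unfolding uniform_completion_ones_prefix[OF \<open>j < k\<close>]
    by (rule expectation_bind_bounded[OF abs_potential_opt_le])
  also have "\<dots> = E (uniform_bits l) (\<lambda>b. block_time p l b / keep_prob j + tail_time (Suc j))"
  proof (rule expectation_cong)
    fix b assume "b \<in> set_pmf (uniform_bits l)"
    then have b: "length b = l" by simp
    show "E (if \<forall>x\<in>set b. x then uniform_completion (ones_prefix (Suc j)) else block_state j b)
        potential_opt = block_time p l b / keep_prob j + tail_time (Suc j)"
    proof (cases "\<forall>x\<in>set b. x")
      case True
      then show ?thesis
        using IH all_True_eq_replicate[OF b True] by (simp add: block_time_replicate_True)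
    next
      case False
      then show ?thesis
        using expectation_block_state[OF b False \<open>j < k\<close>] by (simp only: if_False)
    qed
  qed
  also have "\<dots> = mean_block_time p l / keep_prob j + tail_time (Suc j)"
    by (simp add: expectation_uniform_bits_block_time)
  finally show ?case
    using tail_time_step[OF \<open>j < k\<close>] by simp
qed

lemma active_block_decomp:
  assumes "length x = n" "blo l x < k"
  shows "x = ones_prefix (blo l x) @ active_block x @ drop ((blo l x + 1) * l) x"
    and "length (active_block x) = l" and "\<not> (\<forall>b\<in>set (active_block x). b)"
proof -
  define i where "i = blo l x"
  have dec: "take (i * l) x = replicate (i * l) True \<and> \<not> (\<forall>b\<in>set (take l (drop (i * l) x)). b)"
    using blo_decomp[OF l_pos i_def[symmetric]] block_end_le_n[OF assms(2)] assms(1) i_def by simp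
  have "x = take (i * l) x @ take l (drop (i * l) x) @ drop l (drop (i * l) x)"
    by (simp only: append_take_drop_id)
  also have "\<dots> = ones_prefix i @ active_block x @ drop ((i + 1) * l) x"
    using dec by (simp add: ones_prefix_def active_block_def i_def[symmetric] add.commute)
  finally show "x = ones_prefix (blo l x) @ active_block x @ drop ((blo l x + 1) * l) x"
    unfolding i_def .
  show "length (active_block x) = l"
    by (rule length_active_block[OF assms])
  show "\<not> (\<forall>b\<in>set (active_block x). b)"
    using dec by (simp add: active_block_def i_def)
qed

lemma resample_suffix_eq_block_state:
  assumes "length x = n" "blo l x < k"
  shows "resample_suffix x = block_state (blo l x) (active_block x)"
proof -
  have len: "length (drop ((blo l x + 1) * l) x) = n - (blo l x + 1) * l"
    using assms(1) by simp
  have "resample_suffix x = map_pmf (\<lambda>z. Some (ones_prefix (blo l x) @ active_block x @ z))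
      (uniform_bits (length (drop ((blo l x + 1) * l) x)))"
    using resample_suffix_ones_prefix_block[OF active_block_decomp(2,3)[OF assms],
        of "blo l x" "drop ((blo l x + 1) * l) x", folded active_block_decomp(1)[OF assms]] .
  then show ?thesis
    unfolding block_state_def len .
qed


definition ea_transition :: "bool list \<Rightarrow> bool list spmf" where
  "ea_transition x = bind_pmf (ea_step p l x) (kill_opt l n)"

definition resampled_transition :: "bool list \<Rightarrow> bool list spmf" where
  "resampled_transition x = bind_spmf (resample_suffix x) ea_transition"

lemma alive_Suc: "alive (Suc t) = bind_spmf (alive t) ea_transition"
  by (simp add: ea_transition_def[abs_def])

text \<open>An offspring that destroys one of the \<open>i\<close> complete blocks has smaller fitness and is
  rejected; otherwise it keeps them and the mutation acts on the remaining bits only.\<close>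
lemma ea_transition_ones_prefix_block:
  assumes "i < k" "length c = l" "\<not> (\<forall>x\<in>set c. x)" "length z = n - (i + 1) * l"
  shows "ea_transition (ones_prefix i @ c @ z) = bind_pmf (mutate p (ones_prefix i)) (\<lambda>a.
    if a = ones_prefix i then bind_pmf (mutate p c) (\<lambda>b. bind_pmf (mutate p z) (\<lambda>w.
      kill_opt l n (ones_prefix i @ b @ w)))
    else return_spmf (ones_prefix i @ c @ z))"
proof -
  let ?y = "ones_prefix i @ c @ z"
  have len_y: "length ?y = n" using assms block_end_le_n[OF assms(1)] by simp
  have blo_y: "blo l ?y = i" using blo_ones_prefix_block[OF assms(2,3)] .
  have kill_y: "kill_opt l n ?y = return_spmf ?y" using kill_opt_eq[OF len_y] blo_y assms(1) by simp
  have "ea_transition ?y = bind_pmf (mutate p (ones_prefix i)) (\<lambda>a. bind_pmf (mutate p c) (\<lambda>b.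
      bind_pmf (mutate p z) (\<lambda>w. kill_opt l n (if blo l (a @ b @ w) \<ge> blo l ?y then a @ b @ w else ?y))))"
    unfolding ea_transition_def ea_step_def mutate_append
    by (simp add: mutate_append bind_map_pmf bind_assoc_pmf map_bind_pmf map_pmf_comp)
  also have "\<dots> = bind_pmf (mutate p (ones_prefix i)) (\<lambda>a.
      if a = ones_prefix i then bind_pmf (mutate p c) (\<lambda>b. bind_pmf (mutate p z) (\<lambda>w.
        kill_opt l n (ones_prefix i @ b @ w)))
      else return_spmf ?y)"
  proof (rule bind_pmf_cong[OF refl])
    fix a assume "a \<in> set_pmf (mutate p (ones_prefix i))"
    then have len_a: "length a = i * l" by (simp add: length_mutate)
    show "bind_pmf (mutate p c) (\<lambda>b. bind_pmf (mutate p z) (\<lambda>w.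
        kill_opt l n (if blo l (a @ b @ w) \<ge> blo l ?y then a @ b @ w else ?y))) =
      (if a = ones_prefix i then bind_pmf (mutate p c) (\<lambda>b. bind_pmf (mutate p z) (\<lambda>w.
        kill_opt l n (ones_prefix i @ b @ w)))
      else return_spmf ?y)"
    proof (cases "a = ones_prefix i")
      case True
      then have "blo l (a @ b @ w) \<ge> blo l ?y" for b w
        using blo_y by (simp add: blo_ones_prefix_append)
      then show ?thesis using True by simp
    next
      case False
      then have "\<not> blo l (a @ b @ w) \<ge> blo l ?y" for b w
        using blo_less[OF l_pos len_a, of "b @ w"] blo_y by (simp add: ones_prefix_def)
      then show ?thesis using False by (simp add: kill_y bind_pmf_const)
    qed
  qed
  finally show ?thesis .
qed

lemma bind_uniform_bits_mutate_completion:
  assumes "length c = l"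
  shows "bind_pmf (uniform_bits (n - (i + 1) * l)) (\<lambda>z. bind_pmf (mutate p c) (\<lambda>b.
      bind_pmf (mutate p z) (\<lambda>w. kill_opt l n (ones_prefix i @ b @ w)))) =
    bind_pmf (mutate p c) (\<lambda>b. uniform_completion (ones_prefix i @ b))"
proof -
  have "bind_pmf (uniform_bits (n - (i + 1) * l)) (\<lambda>z. bind_pmf (mutate p c) (\<lambda>b.
      bind_pmf (mutate p z) (\<lambda>w. kill_opt l n (ones_prefix i @ b @ w)))) =
    bind_pmf (mutate p c) (\<lambda>b. bind_pmf (bind_pmf (uniform_bits (n - (i + 1) * l)) (mutate p))
      (\<lambda>w. kill_opt l n (ones_prefix i @ b @ w)))"
    by (subst bind_commute_pmf) (simp add: bind_assoc_pmf)
  also have "\<dots> = bind_pmf (mutate p c) (\<lambda>b. uniform_completion (ones_prefix i @ b))"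
    unfolding uniform_bits_bind_mutate
    by (rule bind_pmf_cong[OF refl])
       (auto simp: uniform_completion_def assms length_mutate add.commute)
  finally show ?thesis .
qed

lemma resampled_transition_eq:
  assumes "length x = n" "blo l x < k"
  defines "i \<equiv> blo l x"
  shows "resampled_transition x = bind_pmf (mutate p (ones_prefix i)) (\<lambda>a.
    if a = ones_prefix i then bind_pmf (mutate p (active_block x)) (\<lambda>b. uniform_completion (ones_prefix i @ b))
    else resample_suffix x)"
proof -
  define c where "c = active_block x"
  define m where "m = n - (i + 1) * l"
  have "i < k" and len_c: "length c = l" and c: "\<not> (\<forall>b\<in>set c. b)"
    using assms active_block_decomp(2,3)[OF assms(1,2)] by (simp_all add: c_def)
  have resample: "resample_suffix x = map_pmf (\<lambda>z. Some (ones_prefix i @ c @ z)) (uniform_bits m)"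
    unfolding resample_suffix_eq_block_state[OF assms(1,2)] block_state_def i_def c_def m_def ..
  note completion = bind_uniform_bits_mutate_completion[OF len_c, of i, folded m_def]
  have "resampled_transition x = bind_pmf (uniform_bits m) (\<lambda>z. ea_transition (ones_prefix i @ c @ z))"
    unfolding resampled_transition_def resample by (simp add: bind_spmf_def bind_map_pmf)
  also have "\<dots> = bind_pmf (uniform_bits m) (\<lambda>z. bind_pmf (mutate p (ones_prefix i)) (\<lambda>a.
      if a = ones_prefix i then bind_pmf (mutate p c) (\<lambda>b. bind_pmf (mutate p z) (\<lambda>w.
        kill_opt l n (ones_prefix i @ b @ w)))
      else return_spmf (ones_prefix i @ c @ z)))"
    by (rule bind_pmf_cong[OF refl])
       (simp add: ea_transition_ones_prefix_block[OF \<open>i < k\<close> len_c c] m_def)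
  also have "\<dots> = bind_pmf (mutate p (ones_prefix i)) (\<lambda>a. bind_pmf (uniform_bits m) (\<lambda>z.
      if a = ones_prefix i then bind_pmf (mutate p c) (\<lambda>b. bind_pmf (mutate p z) (\<lambda>w.
        kill_opt l n (ones_prefix i @ b @ w)))
      else return_spmf (ones_prefix i @ c @ z)))"
    by (rule bind_commute_pmf)
  also have "\<dots> = bind_pmf (mutate p (ones_prefix i)) (\<lambda>a.
      if a = ones_prefix i then bind_pmf (mutate p c) (\<lambda>b. uniform_completion (ones_prefix i @ b))
      else resample_suffix x)"
  proof (rule bind_pmf_cong[OF refl])
    fix a
    show "bind_pmf (uniform_bits m) (\<lambda>z.
        if a = ones_prefix i then bind_pmf (mutate p c) (\<lambda>b. bind_pmf (mutate p z) (\<lambda>w.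
          kill_opt l n (ones_prefix i @ b @ w)))
        else return_spmf (ones_prefix i @ c @ z)) =
      (if a = ones_prefix i then bind_pmf (mutate p c) (\<lambda>b. uniform_completion (ones_prefix i @ b))
        else resample_suffix x)"
      using completion by (cases "a = ones_prefix i") (simp_all add: resample map_pmf_def)
  qed
  finally show ?thesis
    unfolding c_def .
qed


lemma suffix_uniform_resampled_transition:
  assumes "length x = n" "blo l x < k"
  shows "suffix_uniform (resampled_transition x)"
  unfolding resampled_transition_eq[OF assms]
proof (intro suffix_uniform_bind_pmf)
  fix a
  have "suffix_uniform (uniform_completion (ones_prefix (blo l x) @ b))"
    if "b \<in> set_pmf (mutate p (active_block x))" for b
  proof -
    have b: "length b = l"
      using that active_block_decomp(2)[OF assms] by (simp add: length_mutate)
    show ?thesis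
      unfolding uniform_completion_ones_prefix_block[OF assms(2) b]
      using suffix_uniform_uniform_completion[of "Suc (blo l x)"] assms(2)
        suffix_uniform_block_state[OF b _ assms(2)] by simp
  qed
  moreover have "suffix_uniform (resample_suffix x)"
    unfolding resample_suffix_eq_block_state[OF assms]
    using suffix_uniform_block_state active_block_decomp(2,3)[OF assms] assms(2) by simp
  ultimately show "suffix_uniform (if a = ones_prefix (blo l x)
      then bind_pmf (mutate p (active_block x)) (\<lambda>b. uniform_completion (ones_prefix (blo l x) @ b))
      else resample_suffix x)"
    by (simp add: suffix_uniform_bind_pmf)
qed


lemma potential_eq:
  "length x = n \<Longrightarrow> blo l x < k \<Longrightarrow>
    potential x = block_time p l (active_block x) / keep_prob (blo l x) + tail_time (Suc (blo l x))"
  by (simp add: potential_def)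

lemma expectation_uniform_completion_ones_prefix_block:
  assumes "i < k" "length b = l"
  shows "E (uniform_completion (ones_prefix i @ b)) potential_opt =
    block_time p l b / keep_prob i + tail_time (Suc i)"
proof (cases "\<forall>x\<in>set b. x")
  case True
  then show ?thesis
    using expectation_uniform_completion[of "Suc i"] assms all_True_eq_replicate[OF assms(2) True]
    by (simp add: ones_prefix_Suc block_time_replicate_True)
next
  case False
  show ?thesis
    unfolding uniform_completion_ones_prefix_block[OF assms] if_not_P[OF False]
    by (rule expectation_block_state[OF assms(2) False assms(1)])
qed

lemma expectation_mutate_uniform_completion:
  assumes "i < k" "length c = l" "\<not> (\<forall>b\<in>set c. b)"
  shows "E (bind_pmf (mutate p c) (\<lambda>b. uniform_completion (ones_prefix i @ b))) potential_opt =
    (block_time p l c - 1) / keep_prob i + tail_time (Suc i)"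
proof -
  have "E (bind_pmf (mutate p c) (\<lambda>b. uniform_completion (ones_prefix i @ b))) potential_opt =
      E (mutate p c) (\<lambda>b. block_time p l b / keep_prob i + tail_time (Suc i))"
    using assms(2)
    by (simp add: expectation_bind_bounded[OF abs_potential_opt_le] length_mutate
        expectation_uniform_completion_ones_prefix_block[OF assms(1)] cong: expectation_cong)
  also have "\<dots> = (block_time p l c - 1) / keep_prob i + tail_time (Suc i)"
    using expectation_mutate_block_time[OF p_pos p_less_1 assms(2,3)] by simp
  finally show ?thesis .
qed

lemma expectation_resampled_transition:
  assumes "length x = n" "blo l x < k"
  shows "E (resampled_transition x) potential_opt = potential x - 1"
proof -
  define i where "i = blo l x"
  define c where "c = active_block x"
  have "i < k" and len_c: "length c = l" and c: "\<not> (\<forall>b\<in>set c. b)"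
    using assms active_block_decomp(2,3)[OF assms] by (simp_all add: i_def c_def)
  note improve = expectation_mutate_uniform_completion[OF \<open>i < k\<close> len_c c]
  have stay: "E (resample_suffix x) potential_opt = potential x"
    using expectation_block_state[OF len_c c \<open>i < k\<close>] potential_eq[OF assms]
    by (simp add: resample_suffix_eq_block_state[OF assms] i_def c_def)
  have "E (resampled_transition x) potential_opt = E (mutate p (ones_prefix i)) (\<lambda>a.
      if a = ones_prefix i
      then E (bind_pmf (mutate p c) (\<lambda>b. uniform_completion (ones_prefix i @ b))) potential_opt
      else E (resample_suffix x) potential_opt)"
    unfolding resampled_transition_eq[OF assms] i_def[symmetric] c_def[symmetric]
    by (subst expectation_bind_bounded[OF abs_potential_opt_le]) (rule expectation_cong, simp)
  also have "\<dots> = keep_prob i * ((block_time p l c - 1) / keep_prob i + tail_time (Suc i)) +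
      (1 - keep_prob i) * potential x"
    unfolding expectation_if_eq improve stay
    using p_pos p_less_1 by (simp add: pmf_mutate_self keep_prob_def)
  also have "\<dots> = potential x - 1"
    using keep_prob_pos[of i] potential_eq[OF assms] by (simp add: i_def c_def field_simps)
  finally show ?thesis .
qed

definition non_optimal :: "bool list set" where
  "non_optimal = {x. length x = n \<and> blo l x < k}"

lemma set_spmf_kill_opt: "length y = n \<Longrightarrow> x \<in> set_spmf (kill_opt l n y) \<Longrightarrow> x \<in> non_optimal"
  using blo_le[of l y] l_pos by (auto simp: kill_opt_eq non_optimal_def split: if_splits)

lemma set_spmf_alive: "set_spmf (alive t) \<subseteq> non_optimal"
proof (induction t)
  case 0
  then show ?case
    by (auto simp: ea_init_eq_uniform_bits set_spmf_bind_pmf dest: set_spmf_kill_opt)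
next
  case (Suc t)
  have transition: "set_spmf (ea_transition x) \<subseteq> non_optimal" if "x \<in> non_optimal" for x
  proof -
    have "length y = n" if "y \<in> set_pmf (ea_step p l x)" for y
      using that \<open>x \<in> non_optimal\<close> by (auto simp: ea_step_def non_optimal_def length_mutate)
    then show ?thesis
      unfolding ea_transition_def set_spmf_bind_pmf by (auto simp: bind_UNION intro: set_spmf_kill_opt)
  qed
  show ?case
    using Suc.IH transition unfolding alive_Suc set_bind_spmf by (auto simp: bind_UNION)
qed

lemma suffix_uniform_bind_spmf:
  "(\<And>x. x \<in> set_spmf M \<Longrightarrow> suffix_uniform (f x)) \<Longrightarrow> suffix_uniform (bind_spmf M f)"
  unfolding bind_spmf_def
  by (intro suffix_uniform_bind_pmf) (auto simp: in_set_spmf suffix_uniform_None split: option.split)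

lemma alive_0: "alive 0 = uniform_completion (ones_prefix 0)"
  by (simp add: uniform_completion_def ea_init_eq_uniform_bits ones_prefix_def)

lemma alive_Suc_resampled_if:
  "suffix_uniform (alive t) \<Longrightarrow> alive (Suc t) = bind_spmf (alive t) resampled_transition"
  unfolding suffix_uniform_def alive_Suc resampled_transition_def[abs_def]
  by (metis bind_spmf_assoc)

lemma suffix_uniform_alive: "suffix_uniform (alive t)"
proof (induction t)
  case 0
  show ?case
    unfolding alive_0 by (simp add: suffix_uniform_uniform_completion)
next
  case (Suc t)
  show ?case
    unfolding alive_Suc_resampled_if[OF Suc.IH]
    using set_spmf_alive[of t]
    by (intro suffix_uniform_bind_spmf suffix_uniform_resampled_transition)
       (auto simp: non_optimal_def)
qed

lemma alive_Suc_resampled: "alive (Suc t) = bind_spmf (alive t) resampled_transition"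
  by (rule alive_Suc_resampled_if[OF suffix_uniform_alive])

definition expected_potential :: "nat \<Rightarrow> real" where
  "expected_potential t = E (alive t) potential_opt"

lemma weight_spmf_eq_expectation: "weight_spmf M = E M (\<lambda>ov. if ov = None then 0 else 1)"
  by (simp add: expectation_if_eq weight_spmf_conv_pmf_None)

lemma expected_potential_Suc:
  "expected_potential (Suc t) = expected_potential t - weight_spmf (alive t)"
proof -
  have "expected_potential (Suc t) =
      E (alive t) (case_option 0 (\<lambda>x. E (resampled_transition x) potential_opt))"
    unfolding expected_potential_def alive_Suc_resampled bind_spmf_def
    by (subst expectation_bind_bounded[OF abs_potential_opt_le])
       (auto simp: potential_opt_def intro: expectation_cong split: option.split)
  also have "\<dots> = E (alive t) (\<lambda>ov. potential_opt ov - (if ov = None then 0 else 1))"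
  proof (rule expectation_cong)
    fix ov assume ov: "ov \<in> set_pmf (alive t)"
    show "case_option 0 (\<lambda>x. E (resampled_transition x) potential_opt) ov =
        potential_opt ov - (if ov = None then 0 else 1)"
    proof (cases ov)
      case (Some x)
      then have "x \<in> non_optimal"
        using ov set_spmf_alive[of t] by (auto simp: in_set_spmf)
      then show ?thesis
        using Some by (simp add: non_optimal_def expectation_resampled_transition)
    qed simp
  qed
  also have "\<dots> = expected_potential t - weight_spmf (alive t)"
    unfolding expected_potential_def weight_spmf_eq_expectation
    by (rule Bochner_Integration.integral_diff)
       (auto intro: integrable_measure_pmf_bounded[OF abs_potential_opt_le]
         integrable_measure_pmf_bounded[where B = 1])
  finally show ?thesis .
qed

lemma expected_potential_0: "expected_potential 0 = tail_time 0"
  unfolding expected_potential_def alive_0 by (simp add: expectation_uniform_completion)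

lemma expected_potential_nonneg: "0 \<le> expected_potential t"
  unfolding expected_potential_def
  by (rule Bochner_Integration.integral_nonneg) (simp add: potential_opt_nonneg)

lemma expected_potential_le: "expected_potential t \<le> potential_bound * weight_spmf (alive t)"
proof -
  have "expected_potential t \<le> E (alive t) (\<lambda>ov. potential_bound * (if ov = None then 0 else 1))"
    unfolding expected_potential_def
  proof (rule integral_mono)
    show "integrable (measure_pmf (alive t)) potential_opt"
      by (rule integrable_measure_pmf_bounded[OF abs_potential_opt_le])
    show "integrable (measure_pmf (alive t)) (\<lambda>ov. potential_bound * (if ov = None then 0 else 1))"
      by (rule integrable_measure_pmf_bounded[where B = "\<bar>potential_bound\<bar>"]) auto
    show "potential_opt ov \<le> potential_bound * (if ov = None then 0 else 1)" for ov
      using abs_potential_opt_le[of ov] by (cases ov) (auto simp: potential_opt_def)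
  qed
  then show ?thesis
    by (simp add: weight_spmf_eq_expectation)
qed

lemma expected_runtime_eq_tail_time: "expected_runtime p l n = ennreal (tail_time 0)"
proof -
  let ?w = "\<lambda>t. weight_spmf (alive t)"
  have partial: "(\<Sum>s<t. ?w s) = expected_potential 0 - expected_potential t" for t
    by (induction t) (simp_all add: expected_potential_Suc)
  have "summable ?w"
    by (rule summableI_nonneg_bounded[where x = "expected_potential 0"])
       (simp_all add: partial expected_potential_nonneg)
  then have bound_lim: "(\<lambda>t. potential_bound * ?w t) \<longlonglongrightarrow> 0"
    using tendsto_mult_right_zero summable_LIMSEQ_zero by blast
  have "expected_potential \<longlonglongrightarrow> 0"
    by (rule tendsto_sandwich[OF _ _ tendsto_const bound_lim])
       (simp_all add: expected_potential_nonneg expected_potential_le)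
  then have "?w sums expected_potential 0"
    unfolding sums_def partial by (auto intro: tendsto_eq_intros)
  then show ?thesis
    unfolding expected_runtime_def expected_potential_0[symmetric]
    by (intro suminf_ennreal_eq) simp_all
qed

end

theorem expected_runtime_blo:
  assumes "0 < p" "p < 1" "1 \<le> l"
  shows "expected_runtime p l (k * l) = ennreal (mean_block_time p l * (\<Sum>i<k. 1 / (1 - p) ^ (i * l)))"
proof -
  interpret blo_ea p l k
    using assms by unfold_locales
  show ?thesis
    by (simp add: expected_runtime_eq_tail_time tail_time_def keep_prob_def atLeast0LessThan)
qed

section \<open>Asymptotics in \<open>p\<close>\<close>

lemma real_choose_two_Suc: "real (Suc m choose 2) = real (m choose 2) + real m"
  by (simp add: numeral_2_eq_2)

lemma real_choose_three_Suc: "real (Suc m choose 3) = real (m choose 3) + real (m choose 2)"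
  by (simp add: numeral_2_eq_2 numeral_3_eq_3)

lemma real_choose_two: "real (m choose 2) = real m * (real m - 1) / 2"
  by (induction m) (simp_all add: real_choose_two_Suc field_simps)

lemma one_minus_power_le:
  fixes x :: real
  assumes "0 \<le> x" "x \<le> 1"
  shows "(1 - x) ^ m \<le> 1 - real m * x + real (m choose 2) * x\<^sup>2"
proof (induction m)
  case 0
  then show ?case by simp
next
  case (Suc m)
  have "(1 - x) ^ Suc m \<le> (1 - x) * (1 - real m * x + real (m choose 2) * x\<^sup>2)"
    using Suc assms by (simp add: mult_left_mono)
  also have "\<dots> = 1 - real (Suc m) * x + real (Suc m choose 2) * x\<^sup>2 - real (m choose 2) * x ^ 3"
    by (simp add: real_choose_two_Suc algebra_simps power2_eq_square power3_eq_cube)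
  also have "\<dots> \<le> 1 - real (Suc m) * x + real (Suc m choose 2) * x\<^sup>2"
    using assms by simp
  finally show ?case .
qed

lemma one_minus_power_ge:
  fixes x :: real
  assumes "0 \<le> x" "x \<le> 1"
  shows "1 - real m * x + real (m choose 2) * x\<^sup>2 - real (m choose 3) * x ^ 3 \<le> (1 - x) ^ m"
proof (induction m)
  case 0
  then show ?case by (simp add: numeral_2_eq_2 numeral_3_eq_3)
next
  case (Suc m)
  have "1 - real (Suc m) * x + real (Suc m choose 2) * x\<^sup>2 - real (Suc m choose 3) * x ^ 3
      \<le> 1 - real (Suc m) * x + real (Suc m choose 2) * x\<^sup>2 - real (Suc m choose 3) * x ^ 3
        + real (m choose 3) * x ^ 4"
    using assms by simp
  also have "\<dots> = (1 - x) * (1 - real m * x + real (m choose 2) * x\<^sup>2 - real (m choose 3) * x ^ 3)"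
    by (simp add: real_choose_two_Suc real_choose_three_Suc algebra_simps power2_eq_square
        power3_eq_cube power4_eq_xxxx)
  also have "\<dots> \<le> (1 - x) ^ Suc m"
    using Suc assms by (simp add: mult_left_mono)
  finally show ?case .
qed

lemma half_le_one_minus_power:
  fixes x :: real
  assumes "0 \<le> x" "x \<le> 1" "(real m - 1) * x \<le> 1"
  shows "real m * x / 2 \<le> 1 - (1 - x) ^ m"
proof -
  have "real (m choose 2) * x\<^sup>2 = (real m * x / 2) * ((real m - 1) * x)"
    by (simp add: real_choose_two power2_eq_square algebra_simps)
  also have "\<dots> \<le> real m * x / 2"
    using assms mult_left_le[of "(real m - 1) * x" "real m * x / 2"] by simp
  finally show ?thesis
    using one_minus_power_le[OF assms(1,2), of m] by simp
qed

definition expansion_error :: "nat \<Rightarrow> real" where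
  "expansion_error m =
    2 * real (m choose 3) + (real m - 1) * real (m choose 2) + (real m - 1) * real (m choose 3)"

lemma expansion_error_nonneg: "1 \<le> m \<Longrightarrow> 0 \<le> expansion_error m"
  by (simp add: expansion_error_def)

lemma inverse_one_minus_power_expansion:
  fixes x :: real
  assumes m: "1 \<le> m" and x: "0 < x" "x \<le> 1" and small: "(real m - 1) * x \<le> 1"
  shows "\<bar>1 / (1 - (1 - x) ^ m) - 1 / (real m * x) - (real m - 1) / (2 * real m)\<bar>
    \<le> expansion_error m * x"
proof -
  define g where "g = 1 - (1 - x) ^ m"
  define rem where "rem = g - (real m * x - real (m choose 2) * x\<^sup>2)"
  \<comment> \<open>the error term over the common denominator \<open>2 m x g\<close>\<close>
  define num where "num = - 2 * rem + (real m - 1) * real (m choose 2) * x ^ 3 - (real m - 1) * x * rem"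
  have rem: "0 \<le> rem" "rem \<le> real (m choose 3) * x ^ 3"
    unfolding rem_def g_def using one_minus_power_le[of x m] one_minus_power_ge[of x m] x by simp_all
  have m_pos: "0 < real m" and m1: "0 \<le> real m - 1"
    using m by simp_all
  have g_ge: "real m * x / 2 \<le> g"
    unfolding g_def using half_le_one_minus_power[of x m] x small by simp
  then have g_pos: "0 < g"
    using m_pos x by (smt (verit) divide_pos_pos mult_pos_pos)
  have "1 / g - 1 / (real m * x) - (real m - 1) / (2 * real m) = num / (2 * real m * x * g)"
  proof -
    have "num = 2 * real m * x - 2 * g - (real m - 1) * x * g"
      unfolding num_def rem_def by (simp add: real_choose_two power2_eq_square power3_eq_cube field_simps)
    then show ?thesis
      using g_pos m_pos x by (simp only:) (simp add: field_simps)
  qed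
  moreover have "\<bar>num\<bar> \<le> expansion_error m * x ^ 3"
  proof -
    have "\<bar>num\<bar> \<le> 2 * rem + (real m - 1) * real (m choose 2) * x ^ 3 + (real m - 1) * x * rem"
      unfolding num_def using rem m1 x by (simp add: abs_le_iff)
    also have "\<dots> \<le> 2 * (real (m choose 3) * x ^ 3) + (real m - 1) * real (m choose 2) * x ^ 3
        + (real m - 1) * 1 * (real (m choose 3) * x ^ 3)"
      using rem m1 x by (intro add_mono mult_left_mono mult_mono) auto
    finally show ?thesis
      by (simp add: expansion_error_def algebra_simps)
  qed
  moreover have "real m * real m * x\<^sup>2 \<le> 2 * real m * x * g"
    using g_ge m_pos x mult_left_mono[OF g_ge, of "2 * real m * x"] by (simp add: power2_eq_square)
  ultimately have "\<bar>1 / g - 1 / (real m * x) - (real m - 1) / (2 * real m)\<bar>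
      \<le> expansion_error m * x ^ 3 / (real m * real m * x\<^sup>2)"
    using g_pos m_pos x
    by (simp add: abs_divide) (rule frac_le; simp add: expansion_error_nonneg[OF m])
  also have "\<dots> = expansion_error m * x / (real m * real m)"
    using x by (simp add: power2_eq_square power3_eq_cube)
  also have "\<dots> \<le> expansion_error m * x"
  proof -
    have "1 \<le> real m * real m"
      using m by (metis mult_mono' mult_1 of_nat_1 of_nat_le_iff zero_le_one)
    then show ?thesis
      using expansion_error_nonneg[OF m] x divide_left_mono[of 1 "real m * real m" "expansion_error m * x"]
      by simp
  qed
  finally show ?thesis
    unfolding g_def .
qed

lemma two_power_times_constants:
  assumes "0 < p"
  shows "2 ^ l * (b_const l / p + a_const l) =
    (\<Sum>m=1..l. real (l choose m) * (1 / (real m * (2 * p)) + (real m - 1) / (2 * real m)))"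
proof -
  have binomial_sum: "(\<Sum>m=1..l. real (l choose m)) = 2 ^ l - 1"
  proof -
    have "(\<Sum>m\<le>l. real (l choose m)) = 2 ^ l"
      using choose_row_sum[of l] by (metis of_nat_numeral of_nat_power of_nat_sum)
    moreover have "{..l} = insert 0 {1..l}" by auto
    ultimately show ?thesis by simp
  qed
  have "(\<Sum>m=1..l. real (l choose m) * (1 / (real m * (2 * p)) + (real m - 1) / (2 * real m))) =
      (\<Sum>m=1..l. real (l choose m) / real m / (2 * p) + real (l choose m) / 2
        - real (l choose m) / real m / 2)"
    using assms by (intro sum.cong) (auto simp: field_simps)
  also have "\<dots> = (\<Sum>m=1..l. real (l choose m) / real m) / (2 * p) +
      (\<Sum>m=1..l. real (l choose m)) / 2 - (\<Sum>m=1..l. real (l choose m) / real m) / 2"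
    by (simp add: sum.distrib sum_subtractf sum_divide_distrib)
  also have "\<dots> = s_const l / (2 * p) + (2 ^ l - 1) / 2 - s_const l / 2"
    unfolding binomial_sum s_const_def ..
  also have "\<dots> = 2 ^ l * (b_const l / p + a_const l)"
    unfolding b_const_def a_const_def using assms by (simp add: field_simps)
  finally show ?thesis by simp
qed

definition expansion_const :: "nat \<Rightarrow> real" where
  "expansion_const l = 2 * (\<Sum>m=1..l. real (l choose m) * expansion_error m) / 2 ^ l"

lemma mean_block_time_expansion:
  assumes p: "0 < p" and small: "2 * p * real l \<le> 1" and l: "1 \<le> l"
  shows "\<bar>mean_block_time p l / 2 ^ l - (b_const l / p + a_const l)\<bar> \<le> expansion_const l * p"
proof -
  have "mean_block_time p l - 2 ^ l * (b_const l / p + a_const l) =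
      (\<Sum>m=1..l. real (l choose m) *
        (1 / (1 - (1 - 2 * p) ^ m) - 1 / (real m * (2 * p)) - (real m - 1) / (2 * real m)))"
    unfolding two_power_times_constants[OF p] mean_block_time_def sum_subtractf[symmetric]
    by (rule sum.cong[OF refl]) (simp add: right_diff_distrib distrib_left)
  then have "\<bar>mean_block_time p l - 2 ^ l * (b_const l / p + a_const l)\<bar> =
      \<bar>\<Sum>m=1..l. real (l choose m) *
        (1 / (1 - (1 - 2 * p) ^ m) - 1 / (real m * (2 * p)) - (real m - 1) / (2 * real m))\<bar>"
    by (rule arg_cong)
  also have "\<dots> \<le> (\<Sum>m=1..l. real (l choose m) * (expansion_error m * (2 * p)))"
  proof (rule order_trans[OF sum_abs sum_mono])
    fix m assume m: "m \<in> {1..l}"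
    have "(real m - 1) * (2 * p) \<le> real l * (2 * p)" "1 * (2 * p) \<le> real l * (2 * p)"
      using m p by (intro mult_right_mono; simp)+
    moreover have "real l * (2 * p) \<le> 1"
      using small by (simp add: ac_simps)
    ultimately have "2 * p \<le> 1" and "(real m - 1) * (2 * p) \<le> 1"
      by linarith+
    with m p have "\<bar>1 / (1 - (1 - 2 * p) ^ m) - 1 / (real m * (2 * p)) - (real m - 1) / (2 * real m)\<bar>
        \<le> expansion_error m * (2 * p)"
      by (intro inverse_one_minus_power_expansion) auto
    then show "\<bar>real (l choose m) *
        (1 / (1 - (1 - 2 * p) ^ m) - 1 / (real m * (2 * p)) - (real m - 1) / (2 * real m))\<bar>
        \<le> real (l choose m) * (expansion_error m * (2 * p))"
      by (simp add: abs_mult mult_left_mono)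
  qed
  also have "\<dots> = (\<Sum>m=1..l. real (l choose m) * expansion_error m) * 2 * p"
    unfolding sum_distrib_right by (rule sum.cong) (simp_all add: mult_ac)
  also have "\<dots> = 2 ^ l * (expansion_const l * p)"
    by (simp add: expansion_const_def)
  finally show ?thesis
    by (simp add: abs_le_iff field_simps)
qed

lemma sum_inverse_powers:
  fixes y :: real
  assumes "0 < y" "y < 1"
  shows "(\<Sum>i<Suc k. 1 / y ^ i) = (1 / y ^ k - y) / (1 - y)"
proof (induction k)
  case 0
  then show ?case using assms by simp
next
  case (Suc k)
  then have "(\<Sum>i<Suc (Suc k). 1 / y ^ i) = (1 / y ^ k - y) / (1 - y) + 1 / y ^ Suc k"
    by simp
  also have "\<dots> = (1 / y ^ Suc k - y) / (1 - y)"
    using assms by (simp add: field_simps)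
  finally show ?case .
qed

lemma sum_inverse_power_blocks:
  fixes p :: real
  assumes p: "0 < p" "p < 1" and l: "1 \<le> l"
  shows "(\<Sum>i<k. 1 / (1 - p) ^ (i * l)) =
    ((1 - p) powi (- int (k * l) + int l) - (1 - p) ^ l) / (1 - (1 - p) ^ l)"
proof (cases k)
  case 0
  then show ?thesis by simp
next
  case (Suc j)
  define y where "y = (1 - p) ^ l"
  have y: "0 < y" "y < 1"
    using p l by (simp_all add: y_def power_less_one_iff)
  have "(\<Sum>i<k. 1 / (1 - p) ^ (i * l)) = (\<Sum>i<Suc j. 1 / y ^ i)"
    unfolding Suc y_def by (simp add: power_mult[symmetric] mult.commute)
  also have "\<dots> = (1 / y ^ j - y) / (1 - y)"
    by (rule sum_inverse_powers[OF y])
  finally have sum: "(\<Sum>i<k. 1 / (1 - p) ^ (i * l)) = (1 / y ^ j - y) / (1 - y)" .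
  have powi: "(1 - p) powi (- int (k * l) + int l) = 1 / y ^ j"
  proof -
    have "- int (k * l) + int l = - int (j * l)"
      using Suc by simp
    then have "(1 - p) powi (- int (k * l) + int l) = inverse ((1 - p) ^ (j * l))"
      by (metis power_int_minus power_int_of_nat of_nat_mult)
    then show ?thesis
      by (simp add: y_def power_mult[symmetric] mult.commute divide_inverse)
  qed
  show ?thesis
    unfolding sum powi y_def ..
qed

lemma expected_runtime_expansion:
  assumes "1 \<le> l" "l dvd n" "0 < p" "2 * p * real l \<le> 1"
  shows "\<exists>r. \<bar>r\<bar> \<le> expansion_const l * p \<and>
    expected_runtime p l n = ennreal (2 ^ l * (b_const l / p + a_const l + r) *
      (((1 - p) powi (- int n + int l) - (1 - p) ^ l) / (1 - (1 - p) ^ l)))"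
proof -
  have "2 * p \<le> 2 * p * real l"
    using assms by simp
  then have "p < 1"
    using assms(4) by linarith
  define r where "r = mean_block_time p l / 2 ^ l - (b_const l / p + a_const l)"
  have "\<bar>r\<bar> \<le> expansion_const l * p"
    unfolding r_def by (rule mean_block_time_expansion[OF assms(3,4,1)])
  moreover have "n = n div l * l"
    using assms(2) by simp
  then have "expected_runtime p l n = ennreal (2 ^ l * (b_const l / p + a_const l + r) *
      (((1 - p) powi (- int n + int l) - (1 - p) ^ l) / (1 - (1 - p) ^ l)))"
    using expected_runtime_blo[OF assms(3) \<open>p < 1\<close> assms(1), of "n div l"]
      sum_inverse_power_blocks[OF assms(3) \<open>p < 1\<close> assms(1), of "n div l"]
    by (simp add: r_def)
  ultimately show ?thesis by blast
qed

theorem mainTheorem15: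
  fixes l :: nat
  assumes "l \<ge> 1"
  shows "\<exists>C \<delta>. \<delta> > 0 \<and> (\<forall>n p. l dvd n \<longrightarrow> 0 < p \<longrightarrow> p < \<delta> \<longrightarrow>
           (\<exists>r. \<bar>r\<bar> \<le> C * p \<and>
              expected_runtime p l n =
                ennreal (2 ^ l * (b_const l / p + a_const l + r) *
                  (((1 - p) powi (- int n + int l) - (1 - p) ^ l) / (1 - (1 - p) ^ l)))))"
proof -
  have small: "2 * p * real l \<le> 1" if "p < 1 / (2 * real l)" for p :: real
    using that assms by (simp add: field_simps)
  show ?thesis
    using expected_runtime_expansion[OF assms _ _ small] assms
    by (intro exI[of _ "expansion_const l"] exI[of _ "1 / (2 * real l)"]) auto
qed

end
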